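(* Let $\lambda_1,\lambda_2,\lambda_1',\lambda_2',\sigma_1,\sigma_2,\sigma_1',\sigma_2'\in\mathbb{C}^*$ and $\eta_1,\eta_2,\eta_1',\eta_2'\in\mathbb{C}$ with $\lambda_1\neq\lambda_2$ and $\lambda_1'\neq\lambda_2'$. Then the irreducible $\mathcal{G}$-modules $\Omega(\lambda_1,\eta_1,\sigma_1,0)\otimes\Omega(\lambda_2,\eta_2,\sigma_2,0)$ and $\Omega(\lambda_1',\eta_1',\sigma_1',0)\otimes\Omega(\lambda_2',\eta_2',\sigma_2',0)$ are isomorphic if and only if either $(\lambda_1,\eta_1,\sigma_1)=(\lambda_1',\eta_1',\sigma_1')$ and $(\lambda_2,\eta_2,\sigma_2)=(\lambda_2',\eta_2',\sigma_2')$, or $(\lambda_1,\eta_1,\sigma_1)=(\lambda_2',\eta_2',\sigma_2')$ and $(\lambda_2,\eta_2,\sigma_2)=(\lambda_1',\eta_1',\sigma_1')$.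
   Context: The planar Galilean conformal algebra $\mathcal{G}$ is the complex Lie algebra with basis $\{L_m,H_m,I_m,J_m\mid m\in\mathbb{Z}\}$ and brackets $[L_m,L_n]=(n-m)L_{m+n}$, $[L_m,H_n]=nH_{m+n}$, $[L_m,I_n]=(n-m)I_{m+n}$, $[L_m,J_n]=(n-m)J_{m+n}$, $[H_m,I_n]=I_{m+n}$, $[H_m,J_n]=-J_{m+n}$, and $[H_m,H_n]=[I_m,I_n]=[J_m,J_n]=[I_m,J_n]=0$ for all $m,n\in\mathbb{Z}$. For $\lambda,\sigma\in\mathbb{C}^*$, $\eta\in\mathbb{C}$, the module $\Omega(\lambda,\eta,\sigma,0)$ is $\mathbb{C}[X,Y]$ with $L_m f(X,Y)=\lambda^m(Y-mX+m\eta)f(X,Y-m)$, $H_m f(X,Y)=\lambda^m X f(X,Y-m)$, $I_m f(X,Y)=\lambda^m\sigma f(X-1,Y-m)$, $J_m f(X,Y)=0$. The tensor product of $\mathcal{G}$-modules has action $x(v\otimes w)=xv\otimes w+v\otimes xw$. (When $\lambda_1\neq\lambda_2$ these tensor products are irreducible.) *)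

theory Defs
  imports Complex_Main
begin

text \<open>Basis elements of the planar Galilean conformal algebra: L_m, H_m, I_m, J_m (m integer).
  A G-module action is determined by the action of the basis elements (by linearity).\<close>
datatype gca_basis = L int | H int | I int | J int

text \<open>Polynomial functions in four complex variables (X1,Y1,X2,Y2).  Since the field
  is infinite, these are in canonical bijection with C[X1,Y1,X2,Y2], which is
  canonically C[X1,Y1] tensor C[X2,Y2].\<close>
inductive_set polyfun4 :: "(complex \<times> complex \<times> complex \<times> complex \<Rightarrow> complex) set" where
  pf_const: "(\<lambda>_. c) \<in> polyfun4"
| pf_X1: "(\<lambda>(x1,y1,x2,y2). x1) \<in> polyfun4"
| pf_Y1: "(\<lambda>(x1,y1,x2,y2). y1) \<in> polyfun4"
| pf_X2: "(\<lambda>(x1,y1,x2,y2). x2) \<in> polyfun4"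
| pf_Y2: "(\<lambda>(x1,y1,x2,y2). y2) \<in> polyfun4"
| pf_add: "f \<in> polyfun4 \<Longrightarrow> g \<in> polyfun4 \<Longrightarrow> (\<lambda>v. f v + g v) \<in> polyfun4"
| pf_mult: "f \<in> polyfun4 \<Longrightarrow> g \<in> polyfun4 \<Longrightarrow> (\<lambda>v. f v * g v) \<in> polyfun4"

text \<open>Action of a basis element on Omega(lambda, eta, sigma, 0), realised on (polynomial)
  functions f(X,Y).\<close>
definition omega_act :: "complex \<Rightarrow> complex \<Rightarrow> complex \<Rightarrow> gca_basis
    \<Rightarrow> (complex \<times> complex \<Rightarrow> complex) \<Rightarrow> (complex \<times> complex \<Rightarrow> complex)" where
  "omega_act lam eta sig g f = (case g of
      L m \<Rightarrow> (\<lambda>(x,y). lam powi m * (y - of_int m * x + of_int m * eta) * f (x, y - of_int m))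
    | H m \<Rightarrow> (\<lambda>(x,y). lam powi m * x * f (x, y - of_int m))
    | I m \<Rightarrow> (\<lambda>(x,y). lam powi m * sig * f (x - 1, y - of_int m))
    | J m \<Rightarrow> (\<lambda>_. 0))"

text \<open>Action on the tensor product Omega(l1,e1,s1,0) (x) Omega(l2,e2,s2,0):
  x(v (x) w) = xv (x) w + v (x) xw, i.e. the first factor acts on (X1,Y1),
  the second on (X2,Y2).\<close>
definition tensor_act :: "complex \<times> complex \<times> complex \<Rightarrow> complex \<times> complex \<times> complex \<Rightarrow> gca_basis
    \<Rightarrow> (complex \<times> complex \<times> complex \<times> complex \<Rightarrow> complex)
    \<Rightarrow> (complex \<times> complex \<times> complex \<times> complex \<Rightarrow> complex)" where
  "tensor_act p1 p2 g F = (case p1 of (l1,e1,s1) \<Rightarrow> case p2 of (l2,e2,s2) \<Rightarrow>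
      (\<lambda>(x1,y1,x2,y2).
          omega_act l1 e1 s1 g (\<lambda>(a,b). F (a,b,x2,y2)) (x1,y1)
        + omega_act l2 e2 s2 g (\<lambda>(a,b). F (x1,y1,a,b)) (x2,y2)))"

definition tensor_modules_iso :: "complex \<times> complex \<times> complex \<Rightarrow> complex \<times> complex \<times> complex
    \<Rightarrow> complex \<times> complex \<times> complex \<Rightarrow> complex \<times> complex \<times> complex \<Rightarrow> bool" where
  "tensor_modules_iso p1 p2 q1 q2 \<longleftrightarrow>
     (\<exists>\<phi>. bij_betw \<phi> polyfun4 polyfun4
        \<and> (\<forall>a b f g. f \<in> polyfun4 \<longrightarrow> g \<in> polyfun4 \<longrightarrow>
              \<phi> (\<lambda>v. a * f v + b * g v) = (\<lambda>v. a * \<phi> f v + b * \<phi> g v))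
        \<and> (\<forall>x f. f \<in> polyfun4 \<longrightarrow> \<phi> (tensor_act p1 p2 x f) = tensor_act q1 q2 x (\<phi> f)))"

end

theory Submission
  imports Defs "HOL-Library.Product_Plus"
begin

text \<open>
  An isomorphism \<open>\<phi>\<close> sends the constant \<open>1\<close> to a nonzero polynomial \<open>F\<close>, and \<open>F\<close> is an
  eigenvector, with the same eigenvalue, of every element of the algebra that has \<open>1\<close> as an
  eigenvector. Since \<open>I\<^sub>m 1 = (\<lambda>\<^sub>1\<^sup>m \<sigma>\<^sub>1 + \<lambda>\<^sub>2\<^sup>m \<sigma>\<^sub>2) 1\<close> and \<open>I\<^sub>m\<close> acts by shifts, which lower the
  degree of polynomials after subtracting the identity, these power sums agree for both modules;
  as exponential polynomials in \<open>m\<close> with distinct bases are independent, \<open>F\<close> is moreover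
  1-periodic in \<open>Y\<^sub>1\<close> and \<open>Y\<^sub>2\<close>. The power sums for \<open>m = 0, 1, 2, 3\<close> determine the pairs
  \<open>{(\<lambda>\<^sub>1, \<sigma>\<^sub>1), (\<lambda>\<^sub>2, \<sigma>\<^sub>2)}\<close>. On Y-periodic functions, \<open>L\<^sub>k + k H\<^sub>k\<close> multiplies by
  \<open>\<lambda>\<^sub>1\<^sup>k (Y\<^sub>1 + k \<eta>\<^sub>1) + \<lambda>\<^sub>2\<^sup>k (Y\<^sub>2 + k \<eta>\<^sub>2)\<close>, so combining three consecutive \<open>k\<close> with the
  coefficients of \<open>(t - \<lambda>\<^sub>1) (t - \<lambda>\<^sub>2)\<close> gives an element acting on \<open>1\<close> and on \<open>F\<close> by the scalar
  \<open>(\<lambda>\<^sub>1 - \<lambda>\<^sub>2) (\<lambda>\<^sub>1\<^sup>m\<^sup>+\<^sup>1 \<eta>\<^sub>1 - \<lambda>\<^sub>2\<^sup>m\<^sup>+\<^sup>1 \<eta>\<^sub>2)\<close>; for \<open>m = 0, 1\<close> these scalars determine the \<open>\<eta>\<close>'s.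
  Conversely, the identity and the swap of the tensor factors are isomorphisms.
\<close>

section \<open>Functions annihilated by iterated differences\<close>

text \<open>These replace polynomials of degree \<open>< n\<close>: they live on any abelian group and are stable
  under affine substitutions, so they serve both for polynomial functions on \<open>\<complex>\<^sup>4\<close> and for
  their restrictions to integer lines \<open>m \<mapsto> v + m d\<close>.\<close>

primrec diff_annihilated :: "nat \<Rightarrow> ('a::ab_group_add \<Rightarrow> 'b::ab_group_add) set" where
  "diff_annihilated 0 = {\<lambda>_. 0}"
| "diff_annihilated (Suc n) = {f. \<forall>u. (\<lambda>x. f (x + u) - f x) \<in> diff_annihilated n}"

lemma diff_annihilated_zero: "(\<lambda>_. 0) \<in> diff_annihilated n"
  by (induction n) auto

lemma diff_annihilated_const: "(\<lambda>_. c) \<in> diff_annihilated (Suc n)"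
  by (simp add: diff_annihilated_zero)

lemma diff_annihilated_Suc: "f \<in> diff_annihilated n \<Longrightarrow> f \<in> diff_annihilated (Suc n)"
  by (induction n arbitrary: f) (auto intro: diff_annihilated_zero)

lemma diff_annihilated_mono: "n \<le> k \<Longrightarrow> f \<in> diff_annihilated n \<Longrightarrow> f \<in> diff_annihilated k"
  by (induction k rule: dec_induct) (blast intro: diff_annihilated_Suc)+

lemma diff_annihilated_lincomb:
  fixes f g :: "'a::ab_group_add \<Rightarrow> 'b::comm_ring"
  shows "f \<in> diff_annihilated n \<Longrightarrow> g \<in> diff_annihilated n \<Longrightarrow>
    (\<lambda>x. a * f x + b * g x) \<in> diff_annihilated n"
proof (induction n arbitrary: f g)
  case (Suc n)
  have "(\<lambda>x. a * (f (x + u) - f x) + b * (g (x + u) - g x)) \<in> diff_annihilated n" for u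
    using Suc by auto
  then show ?case by (simp add: algebra_simps)
qed simp

lemma diff_annihilated_scale:
  fixes f :: "'a::ab_group_add \<Rightarrow> 'b::comm_ring"
  shows "f \<in> diff_annihilated n \<Longrightarrow> (\<lambda>x. a * f x) \<in> diff_annihilated n"
  using diff_annihilated_lincomb[of f n f a 0] by simp

lemma diff_annihilated_add:
  fixes f g :: "'a::ab_group_add \<Rightarrow> 'b::comm_ring_1"
  shows "f \<in> diff_annihilated n \<Longrightarrow> g \<in> diff_annihilated n \<Longrightarrow>
    (\<lambda>x. f x + g x) \<in> diff_annihilated n"
  using diff_annihilated_lincomb[of f n g 1 1] by simp

lemma diff_annihilated_comp_affine:
  assumes "\<And>y w. h (y + w) = h y + g w"
  shows "f \<in> diff_annihilated n \<Longrightarrow> (\<lambda>y. f (h y)) \<in> diff_annihilated n"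
proof (induction n arbitrary: f)
  case (Suc n)
  have "(\<lambda>y. f (h y + g u) - f (h y)) \<in> diff_annihilated n" for u
    using Suc.prems Suc.IH[of "\<lambda>x. f (x + g u) - f x"] by simp
  then show ?case by (simp add: assms)
qed simp

lemma diff_annihilated_shift:
  "f \<in> diff_annihilated n \<Longrightarrow> (\<lambda>x. f (x + w)) \<in> diff_annihilated n"
  by (rule diff_annihilated_comp_affine[where g="\<lambda>w. w"]) (simp_all add: algebra_simps)

lemma diff_annihilated_line:
  fixes F :: "'a::ab_group_add \<Rightarrow> 'b::comm_ring_1"
  assumes "F \<in> diff_annihilated n" and "\<And>k w. d (k + w) = d k + d' w"
  shows "(\<lambda>k. F (v + d k) - F v) \<in> diff_annihilated (Suc n)"
proof -
  have "(\<lambda>k. F (v + d k)) \<in> diff_annihilated n"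
    by (rule diff_annihilated_comp_affine[where g=d', OF _ assms(1)]) (simp add: assms(2) algebra_simps)
  then show ?thesis
    using diff_annihilated_lincomb[OF diff_annihilated_Suc diff_annihilated_const, of _ n 1 "F v" "-1"]
    by simp
qed

lemma diff_annihilated_additive:
  assumes "\<And>x u. h (x + u) = h x + h u"
  shows "h \<in> diff_annihilated 2"
  using assms by (simp add: numeral_2_eq_2 diff_annihilated_zero)

lemma diff_annihilated_mult:
  fixes f g :: "'a::ab_group_add \<Rightarrow> 'b::comm_ring_1"
  shows "f \<in> diff_annihilated n \<Longrightarrow> g \<in> diff_annihilated k \<Longrightarrow>
    (\<lambda>x. f x * g x) \<in> diff_annihilated (n + k)"
proof (induction "n + k" arbitrary: n k f g rule: less_induct)
  case less
  show ?case
  proof (cases n)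
    case 0 then show ?thesis using less.prems by (simp add: diff_annihilated_zero)
  next
    case (Suc n')
    show ?thesis
    proof (cases k)
      case 0 then show ?thesis using less.prems by (simp add: diff_annihilated_zero)
    next
      case (Suc k')
      have "(\<lambda>x. f (x + u) * g (x + u) - f x * g x) \<in> diff_annihilated (n' + k)" for u
      proof -
        have left: "(\<lambda>x. (f (x + u) - f x) * g (x + u)) \<in> diff_annihilated (n' + k)"
          using less \<open>n = Suc n'\<close> by (intro less.hyps diff_annihilated_shift) auto
        have "(\<lambda>x. f x * (g (x + u) - g x)) \<in> diff_annihilated (n + k')"
          using less \<open>k = Suc k'\<close> by (intro less.hyps) auto
        moreover have "n + k' = n' + k" using \<open>n = Suc n'\<close> \<open>k = Suc k'\<close> by simp
        ultimately have right: "(\<lambda>x. f x * (g (x + u) - g x)) \<in> diff_annihilated (n' + k)"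
          by (simp only:)
        have "(\<lambda>x. f (x + u) * g (x + u) - f x * g x)
            = (\<lambda>x. (f (x + u) - f x) * g (x + u) + f x * (g (x + u) - g x))"
          by (simp add: algebra_simps)
        then show ?thesis using diff_annihilated_add[OF left right] by (simp only:)
      qed
      then show ?thesis using \<open>n = Suc n'\<close> by simp
    qed
  qed
qed

lemma diff_annihilated_eigen_zero:
  fixes F :: "'a::ab_group_add \<Rightarrow> 'b::field"
  assumes "F \<in> diff_annihilated n" "c \<noteq> 0"
    and eigen: "\<And>v. c * F v = a * (F (v + d1) - F v) + b * (F (v + d2) - F v)"
  shows "F v = 0"
  using assms(1)
proof (induction n)
  case (Suc n)
  have "(\<lambda>v. a * (F (v + d1) - F v) + b * (F (v + d2) - F v)) \<in> diff_annihilated n"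
    using Suc.prems by (intro diff_annihilated_lincomb) auto
  then have "(\<lambda>v. inverse c * (c * F v)) \<in> diff_annihilated n"
    unfolding eigen by (rule diff_annihilated_scale)
  moreover have "(\<lambda>v. inverse c * (c * F v)) = F"
    using \<open>c \<noteq> 0\<close> by (simp add: field_simps)
  ultimately show ?case by (simp add: Suc.IH)
qed simp

lemma diff_annihilated_geometric:
  fixes r c :: "'a::field"
  assumes "r \<noteq> 0" "r \<noteq> 1"
  shows "(\<lambda>m::int. c * r powi m) \<in> diff_annihilated n \<Longrightarrow> c = 0"
proof (induction n arbitrary: c)
  case 0
  then show ?case by (metis diff_annihilated.simps(1) power_int_0_right mult_1_right singletonD)
next
  case (Suc n)
  have "(\<lambda>m::int. c * r powi (m + 1) - c * r powi m) = (\<lambda>m. (c * (r - 1)) * r powi m)"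
    using assms by (auto simp: power_int_add_1' algebra_simps)
  moreover have "(\<lambda>m::int. c * r powi (m + 1) - c * r powi m) \<in> diff_annihilated n"
    using Suc.prems by simp
  ultimately have "c * (r - 1) = 0" by (intro Suc.IH) simp
  with assms show ?case by simp
qed

lemma diff_annihilated_exp_mult_zero:
  fixes r :: "'a::field" and Q :: "int \<Rightarrow> 'a"
  assumes "r \<noteq> 0" "r \<noteq> 1"
  shows "(\<lambda>m. r powi m * Q m) \<in> diff_annihilated n \<Longrightarrow> Q \<in> diff_annihilated k \<Longrightarrow> Q m = 0"
proof (induction n arbitrary: Q m)
  case 0
  then show ?case using assms by (metis diff_annihilated.simps(1) singletonD mult_eq_0_iff power_int_eq_0_iff)
next
  case (Suc n)
  have "(\<lambda>m. r powi (m + 1) * Q (m + 1) - r powi m * Q m) = (\<lambda>m. r powi m * (r * Q (m + 1) - Q m))"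
    using assms by (auto simp: power_int_add_1 algebra_simps)
  moreover have "(\<lambda>m. r powi (m + 1) * Q (m + 1) - r powi m * Q m) \<in> diff_annihilated n"
    using Suc.prems by simp
  ultimately have "(\<lambda>m. r powi m * (r * Q (m + 1) - Q m)) \<in> diff_annihilated n"
    by simp
  moreover have "(\<lambda>m. r * Q (m + 1) + (-1) * Q m) \<in> diff_annihilated k"
    using Suc.prems diff_annihilated_shift[of Q k 1] by (intro diff_annihilated_lincomb) auto
  ultimately have step: "r * Q (j + 1) = Q j" for j
    using Suc.IH[of "\<lambda>m. r * Q (m + 1) - Q m" j] by simp
  have geometric: "Q j = Q 0 * (inverse r) powi j" for j
  proof (induction j rule: int_induct[where k=0])
    case (step1 i)
    have "Q (i + 1) = inverse r * Q i" using step[of i] assms by (simp add: field_simps)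
    also have "\<dots> = Q 0 * inverse r powi (i + 1)" using step1 assms by (simp add: power_int_add_1)
    finally show ?case .
  next
    case (step2 i)
    have "Q (i - 1) = r * Q i" using step[of "i - 1"] by simp
    also have "\<dots> = Q 0 * inverse r powi (i - 1)"
      using step2 assms by (simp add: power_int_diff field_simps)
    finally show ?case .
  qed simp
  then have "(\<lambda>m. Q 0 * (inverse r) powi m) \<in> diff_annihilated k"
    using Suc.prems by (metis (no_types, lifting) ext)
  then have "Q 0 = 0" using assms by (intro diff_annihilated_geometric[of "inverse r"]) auto
  then show ?case using geometric[of m] by simp
qed

lemma exp_poly_two_bases_zero:
  fixes A B :: "int \<Rightarrow> 'a::field"
  assumes "l1 \<noteq> 0" "l2 \<noteq> 0" "l1 \<noteq> l2"
    and "A \<in> diff_annihilated n" "B \<in> diff_annihilated n"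
    and sum_zero: "\<And>k. l1 powi k * A k + l2 powi k * B k = 0"
  shows "A k = 0 \<and> B k = 0"
proof -
  have "(\<lambda>k. (l1 / l2) powi k * A k) = (\<lambda>k. (-1) * B k)"
    using sum_zero assms(2) by (simp add: fun_eq_iff power_int_divide_distrib field_simps add_eq_0_iff)
  then have "(\<lambda>k. (l1 / l2) powi k * A k) \<in> diff_annihilated n"
    using diff_annihilated_scale[OF assms(5), of "-1"] by simp
  then have "A k = 0" for k
    using assms by (intro diff_annihilated_exp_mult_zero[of "l1 / l2"]) auto
  then show ?thesis using sum_zero[of k] assms(2) by simp
qed

section \<open>Recovering the parameters from their invariants\<close>

lemma power_sums_determine_pairs:
  fixes l1 l2 m1 m2 s1 s2 t1 t2 :: "'a::idom"
  assumes "l1 \<noteq> l2" "s1 \<noteq> 0" "s2 \<noteq> 0"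
    and g: "s1 + s2 = t1 + t2"
    and h1: "l1 * s1 + l2 * s2 = m1 * t1 + m2 * t2"
    and h2: "l1^2 * s1 + l2^2 * s2 = m1^2 * t1 + m2^2 * t2"
    and h3: "l1^3 * s1 + l2^3 * s2 = m1^3 * t1 + m2^3 * t2"
  shows "(l1 = m1 \<and> s1 = t1 \<and> l2 = m2 \<and> s2 = t2) \<or> (l1 = m2 \<and> s1 = t2 \<and> l2 = m1 \<and> s2 = t1)"
proof -
  define a0 a1 a2 a3 where "a0 = s1 + s2" and "a1 = l1 * s1 + l2 * s2"
    and "a2 = l1^2 * s1 + l2^2 * s2" and "a3 = l1^3 * s1 + l2^3 * s2"
  define de dp where "de = l1 + l2 - (m1 + m2)" and "dp = l1 * l2 - m1 * m2"
  \<comment> \<open>The moments \<open>a\<^sub>k\<close> satisfy the recurrences of both characteristic polynomials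
      \<open>(t - l1) (t - l2)\<close> and \<open>(t - m1) (t - m2)\<close>, so \<open>(-dp, de)\<close> lies in the kernel of
      the Hankel matrix of \<open>a0, a1, a2\<close>, whose determinant is \<open>s1 s2 (l1 - l2)\<^sup>2 \<noteq> 0\<close>.\<close>
  have "a2 = (l1 + l2) * a1 - l1 * l2 * a0" "a3 = (l1 + l2) * a2 - l1 * l2 * a1"
    unfolding a0_def a1_def a2_def a3_def
    by (simp_all add: power2_eq_square power3_eq_cube algebra_simps)
  moreover have "a2 = (m1 + m2) * a1 - m1 * m2 * a0" "a3 = (m1 + m2) * a2 - m1 * m2 * a1"
    unfolding a0_def a1_def a2_def a3_def g h1 h2 h3
    by (simp_all add: power2_eq_square power3_eq_cube algebra_simps)
  ultimately have q1: "de * a1 = dp * a0" and q2: "de * a2 = dp * a1"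
    unfolding de_def dp_def by algebra+
  have hankel: "a0 * a2 - a1^2 = s1 * s2 * (l1 - l2)^2"
    unfolding a0_def a1_def a2_def by (simp add: power2_eq_square algebra_simps)
  have "de^2 * (a0 * a2 - a1^2) = (de * a0) * (dp * a1) - (dp * a0) * (de * a1)"
    using q1 q2 by (simp add: power2_eq_square algebra_simps)
  moreover have "dp^2 * (a0 * a2 - a1^2) = (de * a1) * (dp * a2) - (de * a2) * (dp * a1)"
    using q1 q2 by (simp add: power2_eq_square algebra_simps)
  ultimately have "de = 0" "dp = 0"
    using hankel assms(1-3) by (simp_all add: algebra_simps)
  then have "m1 + m2 = l1 + l2" and "(m1 - l1) * (m1 - l2) = 0"
    unfolding de_def dp_def by algebra+
  then consider "m1 = l1" "m2 = l2" | "m1 = l2" "m2 = l1" by fastforce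
  then show ?thesis
  proof cases
    case 1
    then have "(s1 - t1) * (l1 - l2) = (l1 * s1 + l2 * s2 - (m1 * t1 + m2 * t2)) - l2 * (s1 + s2 - (t1 + t2))"
      by (simp add: algebra_simps)
    then have "(s1 - t1) * (l1 - l2) = 0" using g h1 by simp
    then show ?thesis using 1 g assms(1) by auto
  next
    case 2
    then have "(s1 - t2) * (l1 - l2) = (l1 * s1 + l2 * s2 - (m1 * t1 + m2 * t2)) - l2 * (s1 + s2 - (t1 + t2))"
      by (simp add: algebra_simps)
    then have "(s1 - t2) * (l1 - l2) = 0" using g h1 by simp
    then show ?thesis using 2 g assms(1) by auto
  qed
qed

lemma two_weights_determine:
  fixes l1 l2 a b :: "'a::idom"
  assumes "l1 \<noteq> l2" "l1 \<noteq> 0" "l2 \<noteq> 0"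
    and "l1 * a = l2 * b" "l1^2 * a = l2^2 * b"
  shows "a = 0 \<and> b = 0"
proof -
  have "l1 * (l1 * a) = l2 * (l2 * b)"
    using assms(5) by (simp add: power2_eq_square mult.assoc)
  also have "\<dots> = l2 * (l1 * a)"
    using assms(4) by simp
  finally have "l1 * (l1 * a) = l2 * (l1 * a)" .
  then have "a = 0" using assms(1,2) by simp
  then show ?thesis using assms(3,4) by simp
qed

lemma params_determined_by_invariants:
  fixes l1 l2 l1' l2' s1 s2 s1' s2' e1 e2 e1' e2' :: "'a::field"
  assumes "l1 \<noteq> 0" "l2 \<noteq> 0" "s1 \<noteq> 0" "s2 \<noteq> 0" "l1 \<noteq> l2"
    and power_sums: "\<And>m. l1 powi m * s1 + l2 powi m * s2 = l1' powi m * s1' + l2' powi m * s2'"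
    and eta_weights: "\<And>m. (l1 - l2) * (l1 powi (m + 1) * e1 - l2 powi (m + 1) * e2)
      = (l1' - l2') * (l1' powi (m + 1) * e1' - l2' powi (m + 1) * e2')"
  shows "((l1,e1,s1) = (l1',e1',s1') \<and> (l2,e2,s2) = (l2',e2',s2'))
       \<or> ((l1,e1,s1) = (l2',e2',s2') \<and> (l2,e2,s2) = (l1',e1',s1'))"
proof -
  have "(l1 = l1' \<and> s1 = s1' \<and> l2 = l2' \<and> s2 = s2') \<or> (l1 = l2' \<and> s1 = s2' \<and> l2 = l1' \<and> s2 = s1')"
    using power_sums[of 0] power_sums[of 1] power_sums[of 2] power_sums[of 3] assms(3-5)
    by (intro power_sums_determine_pairs) simp_all
  moreover have weights: "(l1 - l2) * (l1 * e1 - l2 * e2) = (l1' - l2') * (l1' * e1' - l2' * e2')"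
      "(l1 - l2) * (l1^2 * e1 - l2^2 * e2) = (l1' - l2') * (l1'^2 * e1' - l2'^2 * e2')"
    using eta_weights[of 0] eta_weights[of 1] by simp_all
  ultimately show ?thesis
  proof (elim disjE conjE)
    assume "l1 = l1'" "s1 = s1'" "l2 = l2'" "s2 = s2'"
    then have "l1 * e1 - l2 * e2 = l1 * e1' - l2 * e2'" "l1^2 * e1 - l2^2 * e2 = l1^2 * e1' - l2^2 * e2'"
      using weights \<open>l1 \<noteq> l2\<close> by simp_all
    then have "l1 * (e1 - e1') = l2 * (e2 - e2')" "l1^2 * (e1 - e1') = l2^2 * (e2 - e2')"
      by algebra+
    then have "e1 = e1' \<and> e2 = e2'"
      using two_weights_determine[OF assms(5,1,2)] by fastforce
    then show ?thesis using \<open>l1 = l1'\<close> \<open>s1 = s1'\<close> \<open>l2 = l2'\<close> \<open>s2 = s2'\<close> by simp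
  next
    assume "l1 = l2'" "s1 = s2'" "l2 = l1'" "s2 = s1'"
    then have "(l1' - l2') * (l1' * e1' - l2' * e2') = (l1 - l2) * (l1 * e2' - l2 * e1')"
        "(l1' - l2') * (l1'^2 * e1' - l2'^2 * e2') = (l1 - l2) * (l1^2 * e2' - l2^2 * e1')"
      by (simp_all add: algebra_simps)
    then have "l1 * e1 - l2 * e2 = l1 * e2' - l2 * e1'" "l1^2 * e1 - l2^2 * e2 = l1^2 * e2' - l2^2 * e1'"
      using weights \<open>l1 \<noteq> l2\<close> by simp_all
    then have "l1 * (e1 - e2') = l2 * (e2 - e1')" "l1^2 * (e1 - e2') = l2^2 * (e2 - e1')"
      by algebra+
    then have "e1 = e2' \<and> e2 = e1'"
      using two_weights_determine[OF assms(5,1,2)] by fastforce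
    then show ?thesis using \<open>l1 = l2'\<close> \<open>s1 = s2'\<close> \<open>l2 = l1'\<close> \<open>s2 = s1'\<close> by simp
  qed
qed

section \<open>Polynomial functions and the action on the tensor product\<close>

type_synonym params = "complex \<times> complex \<times> complex"
type_synonym fun4 = "complex \<times> complex \<times> complex \<times> complex \<Rightarrow> complex"

abbreviation X1 :: "complex \<times> complex \<times> complex \<times> complex \<Rightarrow> complex" where "X1 v \<equiv> fst v"
abbreviation Y1 :: "complex \<times> complex \<times> complex \<times> complex \<Rightarrow> complex" where "Y1 v \<equiv> fst (snd v)"
abbreviation X2 :: "complex \<times> complex \<times> complex \<times> complex \<Rightarrow> complex" where "X2 v \<equiv> fst (snd (snd v))"
abbreviation Y2 :: "complex \<times> complex \<times> complex \<times> complex \<Rightarrow> complex" where "Y2 v \<equiv> snd (snd (snd v))"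

lemma polyfun4_coordinates:
  "(\<lambda>v. X1 v) \<in> polyfun4" "(\<lambda>v. Y1 v) \<in> polyfun4" "(\<lambda>v. X2 v) \<in> polyfun4" "(\<lambda>v. Y2 v) \<in> polyfun4"
  using polyfun4.pf_X1 polyfun4.pf_Y1 polyfun4.pf_X2 polyfun4.pf_Y2
  by (simp_all add: case_prod_beta')

lemma polyfun4_diff:
  assumes "f \<in> polyfun4" "g \<in> polyfun4"
  shows "(\<lambda>v. f v - g v) \<in> polyfun4"
  using polyfun4.pf_add[OF assms(1) polyfun4.pf_mult[OF polyfun4.pf_const[of "-1"] assms(2)]] by simp

lemma polyfun4_subst:
  assumes "a1 \<in> polyfun4" "a2 \<in> polyfun4" "a3 \<in> polyfun4" "a4 \<in> polyfun4"
  shows "f \<in> polyfun4 \<Longrightarrow> (\<lambda>v. f (a1 v, a2 v, a3 v, a4 v)) \<in> polyfun4"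
  by (induction rule: polyfun4.induct) (simp_all add: assms polyfun4.intros)

lemma tensor_act_L: "tensor_act (l1,e1,s1) (l2,e2,s2) (L m) F = (\<lambda>v.
    l1 powi m * (Y1 v - of_int m * X1 v + of_int m * e1) * F (X1 v, Y1 v - of_int m, X2 v, Y2 v)
  + l2 powi m * (Y2 v - of_int m * X2 v + of_int m * e2) * F (X1 v, Y1 v, X2 v, Y2 v - of_int m))"
  by (auto simp: fun_eq_iff tensor_act_def omega_act_def)

lemma tensor_act_H: "tensor_act (l1,e1,s1) (l2,e2,s2) (H m) F = (\<lambda>v.
    l1 powi m * X1 v * F (X1 v, Y1 v - of_int m, X2 v, Y2 v)
  + l2 powi m * X2 v * F (X1 v, Y1 v, X2 v, Y2 v - of_int m))"
  by (auto simp: fun_eq_iff tensor_act_def omega_act_def)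

lemma tensor_act_I: "tensor_act (l1,e1,s1) (l2,e2,s2) (I m) F = (\<lambda>v.
    l1 powi m * s1 * F (X1 v - 1, Y1 v - of_int m, X2 v, Y2 v)
  + l2 powi m * s2 * F (X1 v, Y1 v, X2 v - 1, Y2 v - of_int m))"
  by (auto simp: fun_eq_iff tensor_act_def omega_act_def)

lemma tensor_act_J: "tensor_act (l1,e1,s1) (l2,e2,s2) (J m) F = (\<lambda>_. 0)"
  by (auto simp: fun_eq_iff tensor_act_def omega_act_def)

lemma tensor_act_I_as_shifts: "tensor_act (l1,e1,s1) (l2,e2,s2) (I m) F v =
    l1 powi m * s1 * F (v + (-1, - of_int m, 0, 0)) + l2 powi m * s2 * F (v + (0, 0, -1, - of_int m))"
  by (cases v) (simp add: tensor_act_I)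

lemma tensor_act_polyfun4:
  assumes "F \<in> polyfun4"
  shows "tensor_act P1 P2 x F \<in> polyfun4"
proof -
  obtain l1 e1 s1 l2 e2 s2 where P: "P1 = (l1,e1,s1)" "P2 = (l2,e2,s2)"
    by (metis prod.exhaust)
  have F_subst: "(\<lambda>v. F (a1 v, a2 v, a3 v, a4 v)) \<in> polyfun4"
    if "a1 \<in> polyfun4" "a2 \<in> polyfun4" "a3 \<in> polyfun4" "a4 \<in> polyfun4" for a1 a2 a3 a4
    using polyfun4_subst[OF that assms] .
  note intros = polyfun4.pf_add polyfun4.pf_mult polyfun4_diff polyfun4.pf_const
    polyfun4_coordinates F_subst
  show ?thesis
    by (cases x) (simp_all only: P tensor_act_L tensor_act_H tensor_act_I tensor_act_J; intro intros)+
qed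

lemma diff_annihilated_coordinates:
  "(\<lambda>v. X1 v) \<in> diff_annihilated 2" "(\<lambda>v. Y1 v) \<in> diff_annihilated 2"
  "(\<lambda>v. X2 v) \<in> diff_annihilated 2" "(\<lambda>v. Y2 v) \<in> diff_annihilated 2"
  by (simp_all add: diff_annihilated_additive)

lemma polyfun4_diff_annihilated: "f \<in> polyfun4 \<Longrightarrow> \<exists>n. f \<in> diff_annihilated n"
proof (induction rule: polyfun4.induct)
  case (pf_const c)
  then show ?case using diff_annihilated_const by blast
next
  case (pf_add f g)
  then obtain n k where "f \<in> diff_annihilated n" "g \<in> diff_annihilated k" by blast
  then have "f \<in> diff_annihilated (max n k)" "g \<in> diff_annihilated (max n k)"
    by (meson diff_annihilated_mono max.cobounded1 max.cobounded2)+
  then show ?case using diff_annihilated_add by blast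
next
  case (pf_mult f g)
  then show ?case using diff_annihilated_mult by blast
qed (use diff_annihilated_coordinates in \<open>auto simp: case_prod_beta'\<close>)

section \<open>Intertwiners\<close>

definition intertwiner :: "(fun4 \<Rightarrow> fun4) \<Rightarrow> params \<Rightarrow> params \<Rightarrow> params \<Rightarrow> params \<Rightarrow> bool" where
  "intertwiner \<phi> P1 P2 Q1 Q2 \<longleftrightarrow>
     (\<forall>a b f g. f \<in> polyfun4 \<longrightarrow> g \<in> polyfun4 \<longrightarrow>
        \<phi> (\<lambda>v. a * f v + b * g v) = (\<lambda>v. a * \<phi> f v + b * \<phi> g v))
   \<and> (\<forall>x f. f \<in> polyfun4 \<longrightarrow> \<phi> (tensor_act P1 P2 x f) = tensor_act Q1 Q2 x (\<phi> f))"

lemma tensor_modules_iso_iff_intertwiner: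
  "tensor_modules_iso P1 P2 Q1 Q2 \<longleftrightarrow>
     (\<exists>\<phi>. bij_betw \<phi> polyfun4 polyfun4 \<and> intertwiner \<phi> P1 P2 Q1 Q2)"
  unfolding tensor_modules_iso_def intertwiner_def by blast

lemma intertwiner_linear:
  "intertwiner \<phi> P1 P2 Q1 Q2 \<Longrightarrow> f \<in> polyfun4 \<Longrightarrow> g \<in> polyfun4 \<Longrightarrow>
    \<phi> (\<lambda>v. a * f v + b * g v) = (\<lambda>v. a * \<phi> f v + b * \<phi> g v)"
  unfolding intertwiner_def by blast

lemma intertwiner_commute:
  "intertwiner \<phi> P1 P2 Q1 Q2 \<Longrightarrow> f \<in> polyfun4 \<Longrightarrow>
    \<phi> (tensor_act P1 P2 x f) = tensor_act Q1 Q2 x (\<phi> f)"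
  unfolding intertwiner_def by blast

lemma intertwiner_const:
  assumes "intertwiner \<phi> P1 P2 Q1 Q2"
  shows "\<phi> (\<lambda>_. c) = (\<lambda>v. c * \<phi> (\<lambda>_. 1) v)"
  using intertwiner_linear[OF assms, of "\<lambda>_. 1" "\<lambda>_. 1" c 0] by (simp add: polyfun4.pf_const)

fun lincomb_act :: "params \<Rightarrow> params \<Rightarrow> (complex \<times> gca_basis) list \<Rightarrow> fun4 \<Rightarrow> fun4" where
  "lincomb_act P1 P2 [] F = (\<lambda>_. 0)"
| "lincomb_act P1 P2 ((c, x) # xs) F = (\<lambda>v. c * tensor_act P1 P2 x F v + lincomb_act P1 P2 xs F v)"

lemma lincomb_act_polyfun4: "F \<in> polyfun4 \<Longrightarrow> lincomb_act P1 P2 xs F \<in> polyfun4"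
proof (induction xs)
  case (Cons cx xs)
  then show ?case
    by (cases cx) (auto intro!: polyfun4.pf_add polyfun4.pf_mult polyfun4.pf_const tensor_act_polyfun4)
qed (simp add: polyfun4.pf_const)

lemma lincomb_act_append:
  "lincomb_act P1 P2 (xs @ ys) F = (\<lambda>v. lincomb_act P1 P2 xs F v + lincomb_act P1 P2 ys F v)"
  by (induction P1 P2 xs F rule: lincomb_act.induct) auto

lemma intertwiner_lincomb_act:
  assumes \<phi>: "intertwiner \<phi> P1 P2 Q1 Q2" and "f \<in> polyfun4"
  shows "\<phi> (lincomb_act P1 P2 xs f) = lincomb_act Q1 Q2 xs (\<phi> f)"
proof (induction xs)
  case Nil
  show ?case using intertwiner_const[OF \<phi>, of 0] by simp
next
  case (Cons cx xs)
  obtain c x where cx: "cx = (c, x)" by fastforce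
  have "\<phi> (lincomb_act P1 P2 (cx # xs) f)
      = \<phi> (\<lambda>v. c * tensor_act P1 P2 x f v + 1 * lincomb_act P1 P2 xs f v)"
    by (simp add: cx)
  also have "\<dots> = (\<lambda>v. c * \<phi> (tensor_act P1 P2 x f) v + 1 * \<phi> (lincomb_act P1 P2 xs f) v)"
    using assms(2) by (intro intertwiner_linear[OF \<phi>] tensor_act_polyfun4 lincomb_act_polyfun4)
  also have "\<dots> = lincomb_act Q1 Q2 (cx # xs) (\<phi> f)"
    by (simp add: cx Cons.IH intertwiner_commute[OF \<phi> assms(2)])
  finally show ?case .
qed

lemma intertwiner_eigen_one:
  assumes \<phi>: "intertwiner \<phi> P1 P2 Q1 Q2"
    and "lincomb_act P1 P2 xs (\<lambda>_. 1) = (\<lambda>_. c)"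
  shows "lincomb_act Q1 Q2 xs (\<phi> (\<lambda>_. 1)) = (\<lambda>v. c * \<phi> (\<lambda>_. 1) v)"
proof -
  have "lincomb_act Q1 Q2 xs (\<phi> (\<lambda>_. 1)) = \<phi> (lincomb_act P1 P2 xs (\<lambda>_. 1))"
    by (rule intertwiner_lincomb_act[OF \<phi> polyfun4.pf_const, symmetric])
  also have "\<dots> = (\<lambda>v. c * \<phi> (\<lambda>_. 1) v)"
    using assms(2) intertwiner_const[OF \<phi>, of c] by simp
  finally show ?thesis .
qed

section \<open>Invariants of an isomorphism\<close>

definition Y_periodic :: "fun4 \<Rightarrow> bool" where
  "Y_periodic F \<longleftrightarrow> (\<forall>x1 y1 x2 y2 (k::int).
     F (x1, y1 - of_int k, x2, y2) = F (x1, y1, x2, y2) \<and> F (x1, y1, x2, y2 - of_int k) = F (x1, y1, x2, y2))"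

text \<open>\<open>c (L\<^sub>k + k H\<^sub>k)\<close>, which removes the \<open>X\<close>-dependence of \<open>L\<^sub>k\<close>; in \<open>eta_probe\<close> the coefficients
  \<open>1, -e, p\<close> of \<open>t\<^sup>2 - e t + p = (t - \<lambda>\<^sub>1) (t - \<lambda>\<^sub>2)\<close> then remove the \<open>Y\<close>-dependence.\<close>

definition L_plus_H_elem :: "complex \<Rightarrow> int \<Rightarrow> (complex \<times> gca_basis) list" where
  "L_plus_H_elem c k = [(c, L k), (c * of_int k, H k)]"

definition eta_probe :: "complex \<Rightarrow> complex \<Rightarrow> int \<Rightarrow> (complex \<times> gca_basis) list" where
  "eta_probe e p m = L_plus_H_elem 1 (m + 2) @ L_plus_H_elem (- e) (m + 1) @ L_plus_H_elem p m"

lemma eta_probe_scalar: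
  assumes "l1 \<noteq> 0" "l2 \<noteq> 0" and "Y_periodic F"
  shows "lincomb_act (l1,e1,s1) (l2,e2,s2) (eta_probe (l1 + l2) (l1 * l2) m) F
    = (\<lambda>v. (l1 - l2) * (l1 powi (m + 1) * e1 - l2 powi (m + 1) * e2) * F v)"
proof -
  have LH: "lincomb_act (l1,e1,s1) (l2,e2,s2) (L_plus_H_elem c k) F = (\<lambda>v.
      c * (l1 powi k * (Y1 v + of_int k * e1) + l2 powi k * (Y2 v + of_int k * e2)) * F v)" for c k
    using \<open>Y_periodic F\<close>
    by (simp add: L_plus_H_elem_def Y_periodic_def tensor_act_L tensor_act_H fun_eq_iff algebra_simps)
  show ?thesis
    unfolding eta_probe_def lincomb_act_append LH using assms(1,2)
    by (simp add: fun_eq_iff power_int_add power2_eq_square algebra_simps)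
qed

lemma I_eigenvalue_eq_power_sum:
  assumes "F \<in> polyfun4" "F \<noteq> (\<lambda>_. 0)"
    and eigen: "tensor_act (l1,e1,s1) (l2,e2,s2) (I m) F = (\<lambda>v. c * F v)"
  shows "c = l1 powi m * s1 + l2 powi m * s2"
proof (rule ccontr)
  assume "c \<noteq> l1 powi m * s1 + l2 powi m * s2"
  then have nonzero: "c - (l1 powi m * s1 + l2 powi m * s2) \<noteq> 0" by simp
  obtain n where n: "F \<in> diff_annihilated n"
    using polyfun4_diff_annihilated[OF assms(1)] by blast
  have "(c - (l1 powi m * s1 + l2 powi m * s2)) * F v
      = l1 powi m * s1 * (F (v + (-1, - of_int m, 0, 0)) - F v)
      + l2 powi m * s2 * (F (v + (0, 0, -1, - of_int m)) - F v)" for v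
    using fun_cong[OF eigen, of v] by (simp add: tensor_act_I_as_shifts algebra_simps)
  then have "F v = 0" for v
    by (rule diff_annihilated_eigen_zero[OF n nonzero])
  with assms(2) show False by auto
qed

lemma I_eigenvector_Y_periodic:
  assumes "F \<in> polyfun4" "l1 \<noteq> 0" "l2 \<noteq> 0" "l1 \<noteq> l2" "s1 \<noteq> 0" "s2 \<noteq> 0"
    and eigen: "\<And>m. tensor_act (l1,e1,s1) (l2,e2,s2) (I m) F
      = (\<lambda>v. (l1 powi m * s1 + l2 powi m * s2) * F v)"
  shows "Y_periodic F"
proof -
  obtain n where n: "F \<in> diff_annihilated n"
    using polyfun4_diff_annihilated[OF assms(1)] by blast
  have shift_invariant:
    "F (v + (-1, - of_int k, 0, 0)) = F v \<and> F (v + (0, 0, -1, - of_int k)) = F v" for v k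
  proof -
    define A where "A k = s1 * (F (v + (-1, - of_int k, 0, 0)) - F v)" for k :: int
    define B where "B k = s2 * (F (v + (0, 0, -1, - of_int k)) - F v)" for k :: int
    have "l1 powi k * A k + l2 powi k * B k = 0" for k
      using fun_cong[OF eigen[of k], of v]
      by (simp add: A_def B_def tensor_act_I_as_shifts algebra_simps)
    moreover have "A \<in> diff_annihilated (Suc n)" "B \<in> diff_annihilated (Suc n)"
      unfolding A_def[abs_def] B_def[abs_def]
      using n by (intro diff_annihilated_scale diff_annihilated_line[where d'="\<lambda>w. (0, - of_int w, 0, 0)"]
          diff_annihilated_line[where d'="\<lambda>w. (0, 0, 0, - of_int w)"]; simp)+
    ultimately have "A k = 0 \<and> B k = 0"
      using assms(2-4) by (intro exp_poly_two_bases_zero)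
    then show ?thesis using assms(5,6) by (simp add: A_def B_def)
  qed
  show ?thesis unfolding Y_periodic_def
  proof (intro allI conjI)
    fix x1 y1 x2 y2 :: complex and k :: int
    show "F (x1, y1 - of_int k, x2, y2) = F (x1, y1, x2, y2)"
      using shift_invariant[of "(x1 + 1, y1, x2, y2)" k] shift_invariant[of "(x1 + 1, y1, x2, y2)" 0]
      by simp
    show "F (x1, y1, x2, y2 - of_int k) = F (x1, y1, x2, y2)"
      using shift_invariant[of "(x1, y1, x2 + 1, y2)" k] shift_invariant[of "(x1, y1, x2 + 1, y2)" 0]
      by simp
  qed
qed

lemma tensor_modules_iso_image_of_one:
  assumes "tensor_modules_iso P1 P2 Q1 Q2"
  obtains F where "F \<in> polyfun4" "F \<noteq> (\<lambda>_. 0)"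
    and "\<And>xs c. lincomb_act P1 P2 xs (\<lambda>_. 1) = (\<lambda>_. c) \<Longrightarrow> lincomb_act Q1 Q2 xs F = (\<lambda>v. c * F v)"
proof -
  obtain \<phi> where bij: "bij_betw \<phi> polyfun4 polyfun4" and \<phi>: "intertwiner \<phi> P1 P2 Q1 Q2"
    using assms tensor_modules_iso_iff_intertwiner by blast
  have "\<phi> (\<lambda>_. 1) \<in> polyfun4"
    using bij_betwE[OF bij] polyfun4.pf_const by blast
  moreover have "\<phi> (\<lambda>_. 1) \<noteq> (\<lambda>_. 0)"
  proof
    assume "\<phi> (\<lambda>_. 1) = (\<lambda>_. 0)"
    then have "\<phi> (\<lambda>_. 1) = \<phi> (\<lambda>_. 0)"
      using intertwiner_const[OF \<phi>, of 0] by simp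
    then have "(\<lambda>_::complex \<times> complex \<times> complex \<times> complex. 1::complex) = (\<lambda>_. 0)"
      using bij_betw_imp_inj_on[OF bij] polyfun4.pf_const by (blast dest: inj_onD)
    then show False by (metis zero_neq_one)
  qed
  ultimately show ?thesis
    using that intertwiner_eigen_one[OF \<phi>] by blast
qed

lemma tensor_modules_iso_power_sums:
  assumes "tensor_modules_iso (l1,e1,s1) (l2,e2,s2) (l1',e1',s1') (l2',e2',s2')"
  shows "l1 powi m * s1 + l2 powi m * s2 = l1' powi m * s1' + l2' powi m * s2'"
proof -
  obtain F where F: "F \<in> polyfun4" "F \<noteq> (\<lambda>_. 0)"
    and transfer: "\<And>xs c. lincomb_act (l1,e1,s1) (l2,e2,s2) xs (\<lambda>_. 1) = (\<lambda>_. c) \<Longrightarrow>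
      lincomb_act (l1',e1',s1') (l2',e2',s2') xs F = (\<lambda>v. c * F v)"
    using tensor_modules_iso_image_of_one[OF assms] by blast
  have "lincomb_act (l1,e1,s1) (l2,e2,s2) [(1, I m)] (\<lambda>_. 1) = (\<lambda>_. l1 powi m * s1 + l2 powi m * s2)"
    by (simp add: tensor_act_I)
  then have "tensor_act (l1',e1',s1') (l2',e2',s2') (I m) F = (\<lambda>v. (l1 powi m * s1 + l2 powi m * s2) * F v)"
    using transfer by fastforce
  then show ?thesis by (rule I_eigenvalue_eq_power_sum[OF F])
qed

lemma tensor_modules_iso_eta_weights:
  assumes "l1 \<noteq> 0" "l2 \<noteq> 0" "l1' \<noteq> 0" "l2' \<noteq> 0" "s1 \<noteq> 0" "s2 \<noteq> 0" "s1' \<noteq> 0" "s2' \<noteq> 0"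
    and "l1 \<noteq> l2" "l1' \<noteq> l2'"
    and iso: "tensor_modules_iso (l1,e1,s1) (l2,e2,s2) (l1',e1',s1') (l2',e2',s2')"
  shows "(l1 - l2) * (l1 powi (m + 1) * e1 - l2 powi (m + 1) * e2)
       = (l1' - l2') * (l1' powi (m + 1) * e1' - l2' powi (m + 1) * e2')"
proof -
  obtain F where F: "F \<in> polyfun4" "F \<noteq> (\<lambda>_. 0)"
    and transfer: "\<And>xs c. lincomb_act (l1,e1,s1) (l2,e2,s2) xs (\<lambda>_. 1) = (\<lambda>_. c) \<Longrightarrow>
      lincomb_act (l1',e1',s1') (l2',e2',s2') xs F = (\<lambda>v. c * F v)"
    using tensor_modules_iso_image_of_one[OF iso] by blast
  note power_sums = tensor_modules_iso_power_sums[OF iso]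
  have "lincomb_act (l1,e1,s1) (l2,e2,s2) [(1, I k)] (\<lambda>_. 1) = (\<lambda>_. l1' powi k * s1' + l2' powi k * s2')" for k
    using power_sums[of k] by (simp add: tensor_act_I)
  then have "tensor_act (l1',e1',s1') (l2',e2',s2') (I k) F = (\<lambda>v. (l1' powi k * s1' + l2' powi k * s2') * F v)" for k
    using transfer by fastforce
  then have periodic: "Y_periodic F"
    using F(1) assms by (intro I_eigenvector_Y_periodic)
  have "(l1 = l1' \<and> s1 = s1' \<and> l2 = l2' \<and> s2 = s2') \<or> (l1 = l2' \<and> s1 = s2' \<and> l2 = l1' \<and> s2 = s1')"
    using power_sums[of 0] power_sums[of 1] power_sums[of 2] power_sums[of 3] assms
    by (intro power_sums_determine_pairs) simp_all
  then have symmetric: "l1' + l2' = l1 + l2" "l1' * l2' = l1 * l2" by auto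
  have "lincomb_act (l1,e1,s1) (l2,e2,s2) (eta_probe (l1 + l2) (l1 * l2) m) (\<lambda>_. 1)
      = (\<lambda>_. (l1 - l2) * (l1 powi (m + 1) * e1 - l2 powi (m + 1) * e2))"
    using eta_probe_scalar[of l1 l2 "\<lambda>_. 1"] assms(1,2) by (simp add: Y_periodic_def)
  then have "(\<lambda>v. (l1 - l2) * (l1 powi (m + 1) * e1 - l2 powi (m + 1) * e2) * F v)
      = lincomb_act (l1',e1',s1') (l2',e2',s2') (eta_probe (l1' + l2') (l1' * l2') m) F"
    using transfer symmetric by simp
  also have "\<dots> = (\<lambda>v. (l1' - l2') * (l1' powi (m + 1) * e1' - l2' powi (m + 1) * e2') * F v)"
    using eta_probe_scalar assms(3,4) periodic by blast
  finally show ?thesis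
    using F(2) by (metis mult_right_cancel)
qed

lemma tensor_modules_iso_refl: "tensor_modules_iso P1 P2 P1 P2"
  unfolding tensor_modules_iso_def by (rule exI[of _ id]) simp

definition swap_factors :: "fun4 \<Rightarrow> fun4" where
  "swap_factors f = (\<lambda>v. f (X2 v, Y2 v, X1 v, Y1 v))"

lemma tensor_modules_iso_swap: "tensor_modules_iso P1 P2 P2 P1"
proof -
  obtain l1 e1 s1 l2 e2 s2 where P: "P1 = (l1,e1,s1)" "P2 = (l2,e2,s2)"
    by (metis prod.exhaust)
  have swap_polyfun4: "swap_factors f \<in> polyfun4" if "f \<in> polyfun4" for f
    unfolding swap_factors_def by (rule polyfun4_subst[OF polyfun4_coordinates(3,4,1,2) that])
  have "swap_factors (swap_factors f) = f" for f
    by (simp add: swap_factors_def)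
  then have "bij_betw swap_factors polyfun4 polyfun4"
    by (intro bij_betw_byWitness[where f'=swap_factors]) (auto intro: swap_polyfun4)
  moreover have "swap_factors (tensor_act P1 P2 x f) = tensor_act P2 P1 x (swap_factors f)" for x f
    unfolding P by (cases x) (auto simp: fun_eq_iff swap_factors_def tensor_act_def omega_act_def)
  ultimately show ?thesis
    unfolding tensor_modules_iso_def by (auto simp: swap_factors_def fun_eq_iff)
qed

theorem theorem4p7:
  fixes l1 l2 l1' l2' s1 s2 s1' s2' e1 e2 e1' e2' :: complex
  assumes "l1 \<noteq> 0" "l2 \<noteq> 0" "l1' \<noteq> 0" "l2' \<noteq> 0"
      and "s1 \<noteq> 0" "s2 \<noteq> 0" "s1' \<noteq> 0" "s2' \<noteq> 0"
      and "l1 \<noteq> l2" "l1' \<noteq> l2'"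
  shows "tensor_modules_iso (l1,e1,s1) (l2,e2,s2) (l1',e1',s1') (l2',e2',s2') \<longleftrightarrow>
           (((l1,e1,s1) = (l1',e1',s1') \<and> (l2,e2,s2) = (l2',e2',s2'))
          \<or> ((l1,e1,s1) = (l2',e2',s2') \<and> (l2,e2,s2) = (l1',e1',s1')))"
proof
  assume iso: "tensor_modules_iso (l1,e1,s1) (l2,e2,s2) (l1',e1',s1') (l2',e2',s2')"
  show "((l1,e1,s1) = (l1',e1',s1') \<and> (l2,e2,s2) = (l2',e2',s2'))
      \<or> ((l1,e1,s1) = (l2',e2',s2') \<and> (l2,e2,s2) = (l1',e1',s1'))"
    using assms tensor_modules_iso_power_sums[OF iso] tensor_modules_iso_eta_weights[OF assms iso]
    by (intro params_determined_by_invariants)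
next
  assume "((l1,e1,s1) = (l1',e1',s1') \<and> (l2,e2,s2) = (l2',e2',s2'))
      \<or> ((l1,e1,s1) = (l2',e2',s2') \<and> (l2,e2,s2) = (l1',e1',s1'))"
  then show "tensor_modules_iso (l1,e1,s1) (l2,e2,s2) (l1',e1',s1') (l2',e2',s2')"
    using tensor_modules_iso_refl tensor_modules_iso_swap by metis
qed

end
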